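(* Let $L$ be a Lévy process with triplet $(b,\sigma^2,\mu)$, finite Lévy measure $\lambda=\mu(\mathbb R)<\infty$, and $X$ the solution of $dX_t=-aX_t\,dt+dL_t$ ($X_0$ independent of $L$). Suppose: (i) $a>0$, $\int_{|x|>1}\log|x|\,\mu(dx)<\infty$, $b=0$, $\sup_tE[X_t^2]<\infty$; (ii) $F\big((-2\Delta_n^\beta,2\Delta_n^\beta)\big)=o(T_n^{-1})$; (iii) $\beta\in(0,1/2)$ satisfies $T_n\Delta_n^{(1-2\beta)\wedge(1/2)}=o(1)$. Set $v_n=\Delta_n^\beta$ and define $$A_n^i=\big\{\mathbf 1_{\{|\Delta_iX|\le v_n\}}=\mathbf 1_{\{\Delta_iN=0\}}\big\},\qquad A_n=\bigcap_{i}A_n^i .$$ Then $P(A_n)\to1$ as $n\to\infty$.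
   Context: Since $\mu$ is finite and $b=0$, $L_t=\sigma W_t+J_t$ with $W$ a standard Brownian motion and $J_t=\sum_{k=1}^{N_t}Z_k$ an independent compound Poisson process; $N$ is the Poisson process (intensity $\lambda$) counting the jumps of $L$, and the $Z_k$ are i.i.d. with distribution $F$. Observation scheme: for each $n$, times $0=t_0<t_1<\dots<t_n=T_n$ with $T_n\to\infty$, $\Delta_n=\max_i(t_{i+1}-t_i)\downarrow0$ and $n\Delta_nT_n^{-1}=O(1)$. For a process $Y$, $\Delta_iY=Y_{t_{i+1}}-Y_{t_i}$. *)

theory Defs
  imports "HOL-Probability.Probability" "HOL-Library.Landau_Symbols"
begin

definition gen_sigma :: "'a measure \<Rightarrow> 'b measure \<Rightarrow> ('i \<Rightarrow> 'a \<Rightarrow> 'b) \<Rightarrow> 'i set \<Rightarrow> 'a set set" where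
  "gen_sigma M N X I = sigma_sets (space M) (\<Union>i\<in>I. {X i -` B \<inter> space M | B. B \<in> sets N})"

definition std_brownian_motion :: "'a measure \<Rightarrow> (real \<Rightarrow> 'a \<Rightarrow> real) \<Rightarrow> bool" where
  "std_brownian_motion M W \<longleftrightarrow>
     (\<forall>t\<ge>0. W t \<in> borel_measurable M) \<and>
     (\<forall>\<omega>\<in>space M. W 0 \<omega> = 0 \<and> continuous_on {0..} (\<lambda>t. W t \<omega>)) \<and>
     (\<forall>s t. 0 \<le> s \<and> s < t \<longrightarrow>
        distributed M lborel (\<lambda>\<omega>. W t \<omega> - W s \<omega>) (\<lambda>x. ennreal (normal_density 0 (sqrt (t - s)) x))) \<and>
     (\<forall>(n::nat) (ts::nat \<Rightarrow> real). 0 \<le> ts 0 \<and> (\<forall>i<n. ts i < ts (Suc i)) \<longrightarrow>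
        prob_space.indep_vars M (\<lambda>_. borel) (\<lambda>i \<omega>. W (ts (Suc i)) \<omega> - W (ts i) \<omega>) {..<n})"

definition poisson_process :: "'a measure \<Rightarrow> real \<Rightarrow> (real \<Rightarrow> 'a \<Rightarrow> nat) \<Rightarrow> bool" where
  "poisson_process M lam N \<longleftrightarrow>
     (\<forall>t\<ge>0. N t \<in> measurable M (count_space UNIV)) \<and>
     (\<forall>\<omega>\<in>space M. N 0 \<omega> = 0 \<and>
        (\<forall>s t. 0 \<le> s \<and> s \<le> t \<longrightarrow> N s \<omega> \<le> N t \<omega>) \<and>
        (\<forall>t\<ge>0. continuous (at_right t) (\<lambda>s. real (N s \<omega>)))) \<and>
     (\<forall>s t (k::nat). 0 \<le> s \<and> s \<le> t \<longrightarrow>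
        measure M {\<omega>\<in>space M. N t \<omega> - N s \<omega> = k}
          = exp (- lam * (t - s)) * (lam * (t - s)) ^ k / fact k) \<and>
     (\<forall>(n::nat) (ts::nat \<Rightarrow> real). 0 \<le> ts 0 \<and> (\<forall>i<n. ts i < ts (Suc i)) \<longrightarrow>
        prob_space.indep_vars M (\<lambda>_. count_space UNIV) (\<lambda>i \<omega>. N (ts (Suc i)) \<omega> - N (ts i) \<omega>) {..<n})"

end

theory Submission
  imports Defs
begin

text \<open>On an interval \<open>[u, u+h]\<close> of the grid, \<open>X (u+h) - X u = -a \<integral> X + \<sigma> (W (u+h) - W u) + (jumps)\<close>.
  Unless one of five bad events occurs -- \<open>|X u|\<close> large, \<open>\<sigma>\<^sup>2 \<integral> (W - W u)\<^sup>2\<close> large, \<open>|\<sigma> \<Delta>W|\<close> large,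
  at least two jumps, or a single jump smaller than \<open>2 v\<close> -- a Gronwall-type estimate makes the drift
  and Brownian parts smaller than \<open>v/2\<close> while any jump exceeds \<open>2 v\<close>, so \<open>|\<Delta>X| \<le> v\<close> holds exactly when
  there is no jump. Markov's inequality (second moments of \<open>X\<close>, high Gaussian moments of \<open>\<Delta>W\<close>) and
  Poisson probabilities bound the bad events by \<open>h\<^sup>2/v\<^sup>2\<close>, \<open>h\<^sup>3/v\<^sup>2\<close>, \<open>(h/v\<^sup>2)\<^sup>m\<close>, \<open>(\<lambda>h)\<^sup>2\<close> and
  \<open>\<lambda> h F(-2v, 2v)\<close>; with \<open>v = \<Delta>\<^sup>\<beta>\<close> and \<open>n \<Delta> = O(T)\<close> the union bound over the \<open>n\<close> intervals is
  \<open>O(T \<Delta>\<^bsup>min (1-2\<beta>) (1/2)\<^esup>) + o(1)\<close>.\<close>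

lemma measure_ennreal_Markov:
  fixes f :: "'a \<Rightarrow> ennreal"
  assumes f: "f \<in> borel_measurable M" and B: "(\<integral>\<^sup>+\<omega>. f \<omega> \<partial>M) \<le> ennreal B"
    and B0: "0 \<le> B" and c: "0 < c"
  shows "measure M {\<omega>\<in>space M. ennreal c \<le> f \<omega>} \<le> B / c"
proof -
  have inv: "ennreal c * ennreal (1/c) = 1" using c by (simp flip: ennreal_mult')
  have iff: "ennreal c \<le> y \<longleftrightarrow> 1 \<le> ennreal (1/c) * y" for y :: ennreal
  proof
    assume "ennreal c \<le> y"
    hence "ennreal (1/c) * ennreal c \<le> ennreal (1/c) * y" by (rule mult_left_mono) simp
    thus "1 \<le> ennreal (1/c) * y" using inv by (simp only: mult.commute)
  next
    assume "1 \<le> ennreal (1/c) * y"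
    hence "ennreal c * 1 \<le> ennreal c * (ennreal (1/c) * y)" by (rule mult_left_mono) simp
    thus "ennreal c \<le> y" using inv by (metis mult.assoc mult_1 mult.commute)
  qed
  have "emeasure M {\<omega>\<in>space M. ennreal c \<le> f \<omega>}
      \<le> ennreal (1/c) * (\<integral>\<^sup>+\<omega>. f \<omega> * indicator (space M) \<omega> \<partial>M)"
    unfolding iff by (rule nn_integral_Markov_inequality) (use f in auto)
  also have "(\<integral>\<^sup>+\<omega>. f \<omega> * indicator (space M) \<omega> \<partial>M) = (\<integral>\<^sup>+\<omega>. f \<omega> \<partial>M)"
    by (intro nn_integral_cong) simp
  also have "ennreal (1/c) * \<dots> \<le> ennreal (1/c) * ennreal B"
    using B by (rule mult_left_mono) simp
  also have "\<dots> = ennreal (B / c)"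
    using c B0 by (simp add: divide_inverse mult.commute flip: ennreal_mult)
  finally show ?thesis
    unfolding measure_def using B0 c by (intro enn2real_leI) auto
qed

lemma measure_Markov:
  fixes f :: "'a \<Rightarrow> real"
  assumes f: "f \<in> borel_measurable M" and B: "(\<integral>\<^sup>+\<omega>. ennreal (f \<omega>) \<partial>M) \<le> ennreal B"
    and B0: "0 \<le> B" and c: "0 < c"
  shows "measure M {\<omega>\<in>space M. c \<le> f \<omega>} \<le> B / c"
proof -
  have "{\<omega>\<in>space M. c \<le> f \<omega>} = {\<omega>\<in>space M. ennreal c \<le> ennreal (f \<omega>)}"
    using c by (auto simp: ennreal_le_iff2)
  thus ?thesis using measure_ennreal_Markov[OF _ B B0 c] f by simp
qed

lemma measure_abs_gt_le_even_moment:
  fixes Y :: "'a \<Rightarrow> real"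
  assumes "prob_space M" and Y: "Y \<in> borel_measurable M"
    and B: "(\<integral>\<^sup>+\<omega>. ennreal (Y \<omega> ^ (2*m)) \<partial>M) \<le> ennreal B" and B0: "0 \<le> B" and y: "0 < y"
  shows "measure M {\<omega>\<in>space M. y < \<bar>Y \<omega>\<bar>} \<le> B / y ^ (2*m)"
proof -
  interpret prob_space M by fact
  have "y ^ (2*m) \<le> Y \<omega> ^ (2*m)" if "y < \<bar>Y \<omega>\<bar>" for \<omega>
    using power_mono[of y "\<bar>Y \<omega>\<bar>" "2*m"] that y by (simp add: power_even_abs)
  hence "{\<omega>\<in>space M. y < \<bar>Y \<omega>\<bar>} \<subseteq> {\<omega>\<in>space M. y ^ (2*m) \<le> Y \<omega> ^ (2*m)}"
    by auto
  hence "measure M {\<omega>\<in>space M. y < \<bar>Y \<omega>\<bar>} \<le> measure M {\<omega>\<in>space M. y ^ (2*m) \<le> Y \<omega> ^ (2*m)}"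
    by (rule finite_measure_mono) (use Y in measurable)
  also have "\<dots> \<le> B / y ^ (2*m)"
    using Y by (intro measure_Markov B B0) (use y in auto)
  finally show ?thesis .
qed

lemma nn_integral_normal_even_moment:
  assumes Y: "distributed M lborel Y (\<lambda>x. ennreal (normal_density 0 (sqrt d) x))" and d: "0 < d"
  shows "(\<integral>\<^sup>+\<omega>. ennreal (Y \<omega> ^ (2*m)) \<partial>M) = ennreal (fact (2*m) / ((2/d)^m * fact m))"
proof -
  have hb: "has_bochner_integral lborel (\<lambda>x. normal_density 0 (sqrt d) x * (x - 0) ^ (2*m))
      (fact (2*m) / ((2/d)^m * fact m))"
    using normal_moment_even[of "sqrt d" 0 m] d by simp
  have "(\<integral>\<^sup>+\<omega>. ennreal (Y \<omega> ^ (2*m)) \<partial>M)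
      = (\<integral>\<^sup>+x. ennreal (normal_density 0 (sqrt d) x) * ennreal (x ^ (2*m)) \<partial>lborel)"
    by (rule distributed_nn_integral[OF Y, symmetric]) simp
  also have "\<dots> = (\<integral>\<^sup>+x. ennreal (normal_density 0 (sqrt d) x * (x - 0) ^ (2*m)) \<partial>lborel)"
    by (intro nn_integral_cong) (simp add: ennreal_mult' zero_le_even_power)
  also have "\<dots> = ennreal (fact (2*m) / ((2/d)^m * fact m))"
    by (rule nn_integral_eq_integral[OF integrable.intros[OF hb],
          unfolded has_bochner_integral_integral_eq[OF hb]]) (auto simp: zero_le_even_power)
  finally show ?thesis .
qed

lemma floor_mult_divide_tendsto:
  "(\<lambda>k. real_of_int \<lfloor>real (Suc k) * s\<rfloor> / real (Suc k)) \<longlonglongrightarrow> (s::real)"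
proof (rule tendsto_sandwich[where f="\<lambda>k. s - 1 / real (Suc k)" and h="\<lambda>k. s"])
  have "s - 1 / real (Suc k) \<le> real_of_int \<lfloor>real (Suc k) * s\<rfloor> / real (Suc k)" for k
  proof -
    have "(real (Suc k) * s - 1) / real (Suc k) \<le> real_of_int \<lfloor>real (Suc k) * s\<rfloor> / real (Suc k)"
      by (rule divide_right_mono) linarith+
    thus ?thesis by (simp add: diff_divide_distrib del: of_nat_Suc)
  qed
  thus "\<forall>\<^sub>F k in sequentially. s - 1 / real (Suc k) \<le> real_of_int \<lfloor>real (Suc k) * s\<rfloor> / real (Suc k)"
    by simp
  have "real_of_int \<lfloor>real (Suc k) * s\<rfloor> / real (Suc k) \<le> s" for k
  proof -
    have "real_of_int \<lfloor>real (Suc k) * s\<rfloor> / real (Suc k) \<le> real (Suc k) * s / real (Suc k)"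
      by (rule divide_right_mono) linarith+
    thus ?thesis by (simp del: of_nat_Suc)
  qed
  thus "\<forall>\<^sub>F k in sequentially. real_of_int \<lfloor>real (Suc k) * s\<rfloor> / real (Suc k) \<le> s"
    by simp
  show "(\<lambda>k. s - 1 / real (Suc k)) \<longlonglongrightarrow> s"
    using tendsto_diff[OF tendsto_const LIMSEQ_Suc[OF lim_const_over_n], of s 1] by simp
qed simp

text \<open>The process is the pointwise limit of its evaluations on the grids \<open>\<int> / (k+1)\<close>.\<close>
lemma measurable_continuous_paths:
  fixes Y :: "real \<Rightarrow> 'a \<Rightarrow> real"
  assumes Y: "\<And>t. 0 \<le> t \<Longrightarrow> Y t \<in> borel_measurable M"
    and Yc: "\<And>\<omega>. \<omega> \<in> space M \<Longrightarrow> continuous_on {0..} (\<lambda>t. Y t \<omega>)"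
  shows "(\<lambda>(s, \<omega>). Y (max 0 s) \<omega>) \<in> borel_measurable (lborel \<Otimes>\<^sub>M M)"
proof (rule borel_measurable_LIMSEQ_real)
  define g where "g k = (\<lambda>p. Y (max 0 (real_of_int \<lfloor>real (Suc k) * fst p\<rfloor> / real (Suc k))) (snd p))"
    for k
  show "g k \<in> borel_measurable (lborel \<Otimes>\<^sub>M M)" for k
    unfolding g_def
    by (rule measurable_compose_countable[where f="\<lambda>j p. Y (max 0 (real_of_int j / real (Suc k))) (snd p)"
          and g="\<lambda>p :: real \<times> 'a. \<lfloor>real (Suc k) * fst p\<rfloor>"]) (use Y in measurable)
  fix p :: "real \<times> 'a" assume "p \<in> space (lborel \<Otimes>\<^sub>M M)"
  then obtain s :: real and \<omega> where p: "p = (s, \<omega>)" and \<omega>: "\<omega> \<in> space M" by (auto simp: space_pair_measure)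
  have "(\<lambda>k. max 0 (real_of_int \<lfloor>real (Suc k) * s\<rfloor> / real (Suc k))) \<longlonglongrightarrow> max 0 s"
    by (intro tendsto_max tendsto_const floor_mult_divide_tendsto)
  from continuous_on_tendsto_compose[OF Yc[OF \<omega>] this]
  show "(\<lambda>k. g k p) \<longlonglongrightarrow> (case p of (s, \<omega>) \<Rightarrow> Y (max 0 s) \<omega>)"
    by (auto simp: g_def p)
qed

lemma nn_integral_indicator_continuous:
  fixes g :: "real \<Rightarrow> real"
  assumes gc: "continuous_on {c..d} g" and g0: "\<And>s. s \<in> {c..d} \<Longrightarrow> 0 \<le> g s"
  shows "(\<integral>\<^sup>+s. ennreal (indicator {c..d} s * g s) \<partial>lborel) = ennreal (integral {c..d} g)"
proof (rule nn_integral_has_integral_lborel)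
  show "(\<lambda>s. indicator {c..d} s * g s) \<in> borel_measurable borel"
    using borel_measurable_continuous_on_indicator[OF _ gc] by simp
  show "0 \<le> indicator {c..d} s * g s" for s using g0[of s] by (simp add: indicator_def)
  have "(\<lambda>s. indicator {c..d} s * g s) = (\<lambda>s. if s \<in> {c..d} then g s else 0)"
    by (auto simp: indicator_def)
  thus "((\<lambda>s. indicator {c..d} s * g s) has_integral integral {c..d} g) UNIV"
    using integrable_continuous_interval[OF gc] by (simp only: has_integral_restrict_UNIV has_integral_integral)
qed

lemma integral_abs_less_of_integral_square:
  fixes f :: "real \<Rightarrow> real"
  assumes fc: "continuous_on {c..c+h} f" and h: "0 < h" and x: "0 < x"
    and sq: "h * integral {c..c+h} (\<lambda>s. (f s)\<^sup>2) < x\<^sup>2"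
  shows "integral {c..c+h} (\<lambda>s. \<bar>f s\<bar>) < x"
proof -
  \<comment> \<open>Young's inequality \<open>|y| \<le> x/(2h) + h y\<^sup>2/(2x)\<close>, integrated over the interval\<close>
  have young: "\<bar>y\<bar> \<le> x/(2*h) + (h/(2*x)) * y\<^sup>2" for y
  proof -
    have "0 \<le> (h * \<bar>y\<bar> - x)\<^sup>2" by simp
    hence "2 * x * h * \<bar>y\<bar> \<le> x\<^sup>2 + h\<^sup>2 * y\<^sup>2" by (simp add: power2_eq_square algebra_simps)
    hence "\<bar>y\<bar> \<le> (x\<^sup>2 + h\<^sup>2 * y\<^sup>2) / (2 * x * h)" using h x by (simp add: pos_le_divide_eq mult.commute)
    also have "\<dots> = x/(2*h) + (h/(2*x)) * y\<^sup>2" using h x by (simp add: field_simps power2_eq_square)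
    finally show ?thesis .
  qed
  have int: "(\<lambda>s. x/(2*h) + (h/(2*x)) * (f s)\<^sup>2) integrable_on {c..c+h}"
      "(\<lambda>s. \<bar>f s\<bar>) integrable_on {c..c+h}" "(\<lambda>s. (h/(2*x)) * (f s)\<^sup>2) integrable_on {c..c+h}"
    by (intro integrable_continuous_interval continuous_intros fc)+
  have "integral {c..c+h} (\<lambda>s. \<bar>f s\<bar>) \<le> integral {c..c+h} (\<lambda>s. x/(2*h) + (h/(2*x)) * (f s)\<^sup>2)"
    by (rule integral_le[OF int(2) int(1) young])
  also have "\<dots> = integral {c..c+h} (\<lambda>s. x/(2*h)) + integral {c..c+h} (\<lambda>s. (h/(2*x)) * (f s)\<^sup>2)"
    by (rule integral_add[OF integrable_const_ivl int(3)])
  also have "\<dots> = x/2 + (h/(2*x)) * integral {c..c+h} (\<lambda>s. (f s)\<^sup>2)"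
    using h by simp
  also have "\<dots> < x/2 + (h/(2*x)) * (x\<^sup>2 / h)"
    using sq h x by (intro add_strict_left_mono mult_strict_left_mono) (simp_all add: pos_less_divide_eq mult.commute)
  also have "\<dots> = x" using h x by (simp add: field_simps power2_eq_square)
  finally show ?thesis .
qed

lemma integral_abs_less_of_nn_integral_square:
  fixes f :: "real \<Rightarrow> real"
  assumes fc: "continuous_on {u..u+h} f" and h: "0 < h" and x: "0 < x"
    and sq: "ennreal (\<sigma>\<^sup>2) * (\<integral>\<^sup>+s. ennreal (indicator {u..u+h} s * (f s)\<^sup>2) \<partial>lborel) < ennreal (x\<^sup>2 / h)"
  shows "\<bar>\<sigma>\<bar> * integral {u..u+h} (\<lambda>s. \<bar>f s\<bar>) < x"
proof -
  have f2: "continuous_on {u..u+h} (\<lambda>s. (f s)\<^sup>2)" by (intro continuous_intros fc)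
  have I0: "0 \<le> integral {u..u+h} (\<lambda>s. (f s)\<^sup>2)"
    by (rule integral_nonneg[OF integrable_continuous_interval[OF f2]]) simp
  have "(\<integral>\<^sup>+s. ennreal (indicator {u..u+h} s * (f s)\<^sup>2) \<partial>lborel) = ennreal (integral {u..u+h} (\<lambda>s. (f s)\<^sup>2))"
    by (rule nn_integral_indicator_continuous[OF f2]) simp
  with sq I0 have "\<sigma>\<^sup>2 * integral {u..u+h} (\<lambda>s. (f s)\<^sup>2) < x\<^sup>2 / h"
    by (simp add: ennreal_less_iff flip: ennreal_mult)
  hence "h * integral {u..u+h} (\<lambda>s. (\<sigma> * f s)\<^sup>2) < x\<^sup>2"
    using h by (simp add: power_mult_distrib pos_less_divide_eq mult.commute)
  hence "integral {u..u+h} (\<lambda>s. \<bar>\<sigma> * f s\<bar>) < x"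
    using h x by (intro integral_abs_less_of_integral_square continuous_intros fc)
  thus ?thesis by (simp add: abs_mult)
qed

lemma one_minus_exp_minus_le_square:
  fixes x :: real assumes "0 \<le> x"
  shows "1 - exp (-x) - exp (-x) * x \<le> x\<^sup>2"
proof -
  have "(1 - x) * (1 + x) \<le> exp (-x) * (1 + x)"
    using exp_ge_add_one_self[of "-x"] assms by (intro mult_right_mono) auto
  thus ?thesis by (simp add: algebra_simps power2_eq_square)
qed

lemma power_divide_powr_power:
  fixes D :: real assumes "0 < D"
  shows "D ^ k / (D powr \<beta>) ^ j = D powr (real k - real j * \<beta>)"
  using assms by (simp add: powr_realpow powr_diff flip: powr_power)

lemma power_divide_powr_le:
  fixes h D :: real assumes "0 < h" "h \<le> D"
  shows "h ^ k / (D powr \<beta>) ^ j \<le> D powr (real k - real j * \<beta>)"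
proof -
  have "h ^ k / (D powr \<beta>) ^ j \<le> D ^ k / (D powr \<beta>) ^ j"
    using assms by (intro divide_right_mono power_mono) auto
  thus ?thesis using power_divide_powr_power[of D k \<beta> j] assms by simp
qed

lemma prob_ge_one_minus_sum:
  assumes "prob_space M" "finite I" "G \<in> sets M" "\<And>i. i \<in> I \<Longrightarrow> A i \<in> sets M"
    and "space M - (\<Union>i\<in>I. A i) \<subseteq> G"
  shows "1 - (\<Sum>i\<in>I. measure M (A i)) \<le> measure M G"
proof -
  interpret prob_space M by fact
  have "1 - (\<Sum>i\<in>I. prob (A i)) \<le> 1 - prob (\<Union>i\<in>I. A i)"
    using assms by (simp add: finite_measure_subadditive_finite image_subset_iff)
  also have "\<dots> = prob (space M - (\<Union>i\<in>I. A i))" using assms by (intro prob_compl[symmetric]) auto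
  also have "\<dots> \<le> prob G" using assms by (intro finite_measure_mono) auto
  finally show ?thesis .
qed

lemma (in prob_space) indep_sets_pairD:
  assumes "indep_sets A I" "i \<in> I" "j \<in> I" "i \<noteq> j" "E \<in> A i" "G \<in> A j"
  shows "prob (E \<inter> G) = prob E * prob G"
proof -
  have "prob (\<Inter>k\<in>{i, j}. if k = i then E else G) = (\<Prod>k\<in>{i, j}. prob (if k = i then E else G))"
    using assms by (intro indep_setsD[OF assms(1)]) auto
  thus ?thesis using assms(4) by (simp add: Int_commute)
qed

lemma gen_sigma_basic:
  assumes "i \<in> I" "B \<in> sets N"
  shows "X i -` B \<inter> space M \<in> gen_sigma M N X I"
  unfolding gen_sigma_def using assms by (intro sigma_sets.Basic) blast

lemma gen_sigma_Int:
  assumes "A \<in> gen_sigma M N X I" "B \<in> gen_sigma M N X I"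
  shows "A \<inter> B \<in> gen_sigma M N X I"
proof -
  interpret sigma_algebra "space M" "gen_sigma M N X I"
    unfolding gen_sigma_def by (rule sigma_algebra_sigma_sets) auto
  show ?thesis using assms by (rule Int)
qed

lemma grid_nonneg:
  fixes t :: "nat \<Rightarrow> real"
  assumes "t 0 = 0" "\<And>i. i < n \<Longrightarrow> t i < t (Suc i)" "i \<le> n"
  shows "0 \<le> t i"
  using assms(3)
proof (induction i)
  case (Suc i)
  thus ?case using assms(2)[of i] by simp
qed (simp add: assms(1))

lemma grid_step_le_Max:
  fixes t :: "nat \<Rightarrow> real"
  assumes "i < n"
  shows "t (Suc i) - t i \<le> Max {t (Suc i) - t i | i. i < n}"
proof (rule Max_ge)
  have "{t (Suc i) - t i | i. i < n} = (\<lambda>i. t (Suc i) - t i) ` {..<n}" by auto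
  thus "finite {t (Suc i) - t i | i. i < n}" by simp
qed (use assms in blast)

lemma sum_jumps_increment:
  fixes Nf :: "real \<Rightarrow> nat" and Zf :: "nat \<Rightarrow> real"
  assumes "Nf u \<le> Nf s" "Nf s \<le> Nf r" "Nf r \<le> Nf u + 1"
  shows "(\<Sum>k\<in>{1..Nf s}. Zf k) - (\<Sum>k\<in>{1..Nf u}. Zf k) = (if Nf s = Nf u then 0 else Zf (Nf u + 1))"
proof -
  have "Nf s = Nf u \<or> Nf s = Nf u + 1" using assms by linarith
  moreover have "{1..Nf u + 1} = insert (Nf u + 1) {1..Nf u}" by auto
  ultimately show ?thesis by auto
qed

lemma integral_equation_increment:
  fixes Xf Lf :: "real \<Rightarrow> real"
  assumes eq: "\<And>s. 0 \<le> s \<Longrightarrow> Xf s = x0 - a * integral {0..s} Xf + Lf s"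
    and int: "\<And>s. 0 \<le> s \<Longrightarrow> Xf integrable_on {0..s}" and us: "0 \<le> u" "u \<le> s"
  shows "Xf s - Xf u = - a * integral {u..s} Xf + (Lf s - Lf u)"
proof -
  have "integral {0..u} Xf + integral {u..s} Xf = integral {0..s} Xf"
    using us by (intro Henstock_Kurzweil_Integration.integral_combine int[of s]) auto
  hence "a * integral {0..u} Xf + a * integral {u..s} Xf = a * integral {0..s} Xf"
    by (metis distrib_left)
  thus ?thesis using eq[of s] eq[of u] us by linarith
qed

lemma abs_integrable_of_le_continuous:
  fixes f g :: "real \<Rightarrow> real"
  assumes "f integrable_on {c..d}" "continuous_on {c..d} g" "\<And>s. s \<in> {c..d} \<Longrightarrow> \<bar>f s\<bar> \<le> g s"
  shows "(\<lambda>s. \<bar>f s\<bar>) integrable_on {c..d}"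
proof -
  have "f absolutely_integrable_on {c..d}"
    using assms(3) by (intro absolutely_integrable_integrable_bound[where g=g] assms(1)
        integrable_continuous_interval[OF assms(2)]) auto
  thus ?thesis by (simp add: absolutely_integrable_on_def)
qed

text \<open>A Gronwall-type estimate: \<open>Q = \<integral>|f|\<close> satisfies \<open>a Q \<le> v/8 + (a h) (a Q + z)\<close>, and \<open>a h \<le> 1/8\<close>
  lets the term \<open>a Q\<close> be absorbed.\<close>
lemma drift_integral_bound:
  fixes f D :: "real \<Rightarrow> real"
  assumes fi: "f integrable_on {u..u+h}" and Dc: "continuous_on {u..u+h} D"
    and dev: "\<And>s. s \<in> {u..u+h} \<Longrightarrow> \<bar>f s - f u + a * integral {u..s} f\<bar> \<le> \<bar>D s\<bar> + z"
    and h: "0 < h" and a: "0 < a" and ah: "a * h \<le> 1/8" and z: "0 \<le> z"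
    and fu: "a * h * \<bar>f u\<bar> \<le> v/16" and D: "a * integral {u..u+h} (\<lambda>s. \<bar>D s\<bar>) \<le> v/16"
  shows "a * \<bar>integral {u..u+h} f\<bar> \<le> (v + z) / 7"
proof -
  have Ic: "continuous_on {u..u+h} (\<lambda>s. integral {u..s} f)"
    by (rule indefinite_integral_continuous_1[OF fi])
  have Di: "(\<lambda>s. \<bar>D s\<bar>) integrable_on {u..u+h}"
    by (intro integrable_continuous_interval continuous_intros Dc)
  have fle: "\<bar>f s\<bar> \<le> \<bar>f u\<bar> + a * \<bar>integral {u..s} f\<bar> + \<bar>D s\<bar> + z" if "s \<in> {u..u+h}" for s
    using dev[OF that] abs_mult[of a "integral {u..s} f"] abs_of_pos[OF a] by linarith
  have fa: "(\<lambda>s. \<bar>f s\<bar>) integrable_on {u..u+h}"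
    by (rule abs_integrable_of_le_continuous[OF fi _ fle]) (intro continuous_intros Ic Dc)
  define Q where "Q = integral {u..u+h} (\<lambda>s. \<bar>f s\<bar>)"
  have IQ: "\<bar>integral {u..s} f\<bar> \<le> Q" if "s \<in> {u..u+h}" for s
  proof -
    have sub: "{u..s} \<subseteq> {u..u+h}" using that by auto
    have "\<bar>integral {u..s} f\<bar> \<le> integral {u..s} (\<lambda>s. \<bar>f s\<bar>)"
      using integral_norm_bound_integral[OF integrable_on_subinterval[OF fi sub]
          integrable_on_subinterval[OF fa sub]] by simp
    also have "\<dots> \<le> Q" unfolding Q_def by (rule integral_subset_le[OF sub _ fa]) (use fa sub in
        \<open>auto intro: integrable_on_subinterval\<close>)
    finally show ?thesis .
  qed
  define c where "c = \<bar>f u\<bar> + a * Q + z"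
  have "Q \<le> integral {u..u+h} (\<lambda>s. c + \<bar>D s\<bar>)"
    unfolding Q_def
  proof (rule integral_le[OF fa])
    show "(\<lambda>s. c + \<bar>D s\<bar>) integrable_on {u..u+h}" by (intro integrable_add integrable_const_ivl Di)
    show "\<bar>f s\<bar> \<le> c + \<bar>D s\<bar>" if "s \<in> {u..u+h}" for s
      using fle[OF that] IQ[OF that] a unfolding c_def by (smt (verit) mult_left_mono)
  qed
  also have "\<dots> = h * c + integral {u..u+h} (\<lambda>s. \<bar>D s\<bar>)"
    using h by (simp add: integral_add[OF integrable_const_ivl Di])
  finally have "a * Q \<le> a * (h * c + integral {u..u+h} (\<lambda>s. \<bar>D s\<bar>))"
    using a by (intro mult_left_mono) auto
  also have "\<dots> = a * h * \<bar>f u\<bar> + (a * h) * (a * Q) + (a * h) * z + a * integral {u..u+h} (\<lambda>s. \<bar>D s\<bar>)"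
    unfolding c_def by (simp add: algebra_simps)
  also have "\<dots> \<le> v/16 + (1/8) * (a * Q) + (1/8) * z + v/16"
    using fu D ah a z integral_nonneg[OF fa] by (intro add_mono mult_right_mono) (auto simp: Q_def)
  finally have "a * Q \<le> (v + z) / 7" by simp
  moreover have "\<bar>integral {u..u+h} f\<bar> \<le> Q" using IQ[of "u+h"] h by simp
  ultimately show ?thesis using a by (smt (verit) mult_left_mono)
qed

lemma increment_at_most_one_jump:
  fixes Xf Wf :: "real \<Rightarrow> real" and Nf :: "real \<Rightarrow> nat" and Zf :: "nat \<Rightarrow> real"
  assumes sde: "\<And>s. 0 \<le> s \<Longrightarrow> Xf s = x0 - a * integral {0..s} Xf + (\<sigma> * Wf s + (\<Sum>k\<in>{1..Nf s}. Zf k))"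
    and int: "\<And>s. 0 \<le> s \<Longrightarrow> Xf integrable_on {0..s}"
    and Nmono: "\<And>s t. 0 \<le> s \<Longrightarrow> s \<le> t \<Longrightarrow> Nf s \<le> Nf t"
    and u: "0 \<le> u" and one_jump: "Nf (u+h) \<le> Nf u + 1" and s: "s \<in> {u..u+h}"
  shows "Xf s - Xf u = - a * integral {u..s} Xf
      + (\<sigma> * (Wf s - Wf u) + (if Nf s = Nf u then 0 else Zf (Nf u + 1)))"
proof -
  have N: "Nf u \<le> Nf s" "Nf s \<le> Nf (u+h)" using s u by (auto intro: Nmono)
  have "Xf s - Xf u = - a * integral {u..s} Xf
      + ((\<sigma> * Wf s + (\<Sum>k\<in>{1..Nf s}. Zf k)) - (\<sigma> * Wf u + (\<Sum>k\<in>{1..Nf u}. Zf k)))"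
    by (rule integral_equation_increment[OF sde int u]) (use s in auto)
  thus ?thesis
    unfolding sum_jumps_increment[OF N one_jump, of Zf, symmetric] by (simp add: algebra_simps)
qed

lemma increment_le_iff_no_jump:
  fixes Xf Wf :: "real \<Rightarrow> real" and Nf :: "real \<Rightarrow> nat" and Zf :: "nat \<Rightarrow> real"
  assumes sde: "\<And>s. 0 \<le> s \<Longrightarrow> Xf s = x0 - a * integral {0..s} Xf + (\<sigma> * Wf s + (\<Sum>k\<in>{1..Nf s}. Zf k))"
    and int: "\<And>s. 0 \<le> s \<Longrightarrow> Xf integrable_on {0..s}"
    and Wc: "continuous_on {0..} Wf"
    and Nmono: "\<And>s t. 0 \<le> s \<Longrightarrow> s \<le> t \<Longrightarrow> Nf s \<le> Nf t"
    and u: "0 \<le> u" and h: "0 < h" and a: "0 < a" and v: "0 < v" and ah: "a * h \<le> 1/8"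
    and X_small: "a * h * \<bar>Xf u\<bar> \<le> v/16"
    and W_path_small: "a * \<bar>\<sigma>\<bar> * integral {u..u+h} (\<lambda>s. \<bar>Wf s - Wf u\<bar>) \<le> v/16"
    and W_small: "\<bar>\<sigma>\<bar> * \<bar>Wf (u+h) - Wf u\<bar> \<le> v/8"
    and one_jump: "Nf (u+h) \<le> Nf u + 1"
    and big_jump: "Nf (u+h) = Nf u + 1 \<Longrightarrow> 2 * v \<le> \<bar>Zf (Nf u + 1)\<bar>"
  shows "\<bar>Xf (u+h) - Xf u\<bar> \<le> v \<longleftrightarrow> real (Nf (u+h)) - real (Nf u) = 0"
proof -
  define C where "C s = (if Nf s = Nf u then 0 else Zf (Nf u + 1))" for s
  define z where "z = \<bar>C (u+h)\<bar>"
  have incr: "Xf s - Xf u = - a * integral {u..s} Xf + (\<sigma> * (Wf s - Wf u) + C s)"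
    if "s \<in> {u..u+h}" for s
    unfolding C_def by (rule increment_at_most_one_jump[OF _ _ _ u one_jump that]) (fact sde int Nmono)+
  have dev: "\<bar>Xf s - Xf u + a * integral {u..s} Xf\<bar> \<le> \<bar>\<sigma> * (Wf s - Wf u)\<bar> + z"
    if "s \<in> {u..u+h}" for s
  proof -
    have "Nf u \<le> Nf s" "Nf s \<le> Nf (u+h)" using that u by (auto intro: Nmono)
    hence "\<bar>C s\<bar> \<le> z" using one_jump by (auto simp: z_def C_def)
    moreover have "Xf s - Xf u + a * integral {u..s} Xf = \<sigma> * (Wf s - Wf u) + C s"
      using incr[OF that] by simp
    ultimately show ?thesis by (metis abs_triangle_ineq add_left_mono order_trans)
  qed
  have Wc': "continuous_on {u..u+h} (\<lambda>s. \<sigma> * (Wf s - Wf u))"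
    using u by (intro continuous_intros continuous_on_subset[OF Wc]) auto
  have "integral {u..u+h} (\<lambda>s. \<bar>\<sigma> * (Wf s - Wf u)\<bar>) = \<bar>\<sigma>\<bar> * integral {u..u+h} (\<lambda>s. \<bar>Wf s - Wf u\<bar>)"
    by (simp add: abs_mult)
  hence drift: "a * \<bar>integral {u..u+h} Xf\<bar> \<le> (v + z) / 7"
    using W_path_small u h int[of "u+h"]
    by (intro drift_integral_bound[OF _ Wc' dev h a ah _ X_small])
      (auto simp: z_def mult.assoc intro: integrable_on_subinterval)
  define A where "A = - a * integral {u..u+h} Xf"
  define B where "B = \<sigma> * (Wf (u+h) - Wf u)"
  have final: "Xf (u+h) - Xf u = A + B + C (u+h)"
    using incr[of "u+h"] h unfolding A_def B_def by simp
  have AB: "\<bar>A\<bar> \<le> (v + z) / 7" "\<bar>B\<bar> \<le> v/8"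
    using drift W_small a by (auto simp: A_def B_def abs_mult)
  have tri: "\<bar>A + B + C (u+h)\<bar> \<le> \<bar>A\<bar> + \<bar>B\<bar> + z" "z \<le> \<bar>A + B + C (u+h)\<bar> + \<bar>A\<bar> + \<bar>B\<bar>"
    unfolding z_def by linarith+
  show ?thesis
  proof (cases "Nf (u+h) = Nf u")
    case True
    hence "z = 0" by (simp add: z_def C_def)
    hence "\<bar>Xf (u+h) - Xf u\<bar> \<le> \<bar>A\<bar> + \<bar>B\<bar>" using tri(1) unfolding final by simp
    also have "\<dots> \<le> v" using AB \<open>z = 0\<close> v by simp
    finally have "\<bar>Xf (u+h) - Xf u\<bar> \<le> v" .
    thus ?thesis using True by simp
  next
    case False
    hence "2 * v \<le> z" using big_jump one_jump Nmono[OF u, of "u+h"] h by (simp add: z_def C_def)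
    hence "v < \<bar>Xf (u+h) - Xf u\<bar>" using AB tri(2) v unfolding final by argo
    thus ?thesis using False by simp
  qed
qed

lemma brownian_measurable:
  "std_brownian_motion M W \<Longrightarrow> 0 \<le> t \<Longrightarrow> W t \<in> borel_measurable M"
  unfolding std_brownian_motion_def by auto

lemma brownian_continuous_paths:
  "std_brownian_motion M W \<Longrightarrow> \<omega> \<in> space M \<Longrightarrow> continuous_on {0..} (\<lambda>t. W t \<omega>)"
  unfolding std_brownian_motion_def by auto

lemma brownian_increment_distributed:
  assumes "std_brownian_motion M W" "0 \<le> u" "0 < h"
  shows "distributed M lborel (\<lambda>\<omega>. W (u+h) \<omega> - W u \<omega>) (\<lambda>x. ennreal (normal_density 0 (sqrt h) x))"
proof -
  have "\<forall>s t. 0 \<le> s \<and> s < t \<longrightarrow> distributed M lborel (\<lambda>\<omega>. W t \<omega> - W s \<omega>)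
      (\<lambda>x. ennreal (normal_density 0 (sqrt (t - s)) x))"
    using assms(1) unfolding std_brownian_motion_def by blast
  hence "distributed M lborel (\<lambda>\<omega>. W (u+h) \<omega> - W u \<omega>)
      (\<lambda>x. ennreal (normal_density 0 (sqrt ((u+h) - u)) x))"
    using assms(2,3) by (metis less_add_same_cancel1)
  thus ?thesis by simp
qed

lemma nn_integral_brownian_increment_sq:
  assumes "std_brownian_motion M W" "0 \<le> u" "u \<le> s"
  shows "(\<integral>\<^sup>+\<omega>. ennreal ((W s \<omega> - W u \<omega>)\<^sup>2) \<partial>M) = ennreal (s - u)"
proof (cases "u = s")
  case False
  with assms have "distributed M lborel (\<lambda>\<omega>. W (u + (s-u)) \<omega> - W u \<omega>)
      (\<lambda>x. ennreal (normal_density 0 (sqrt (s-u)) x))"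
    by (intro brownian_increment_distributed) auto
  from nn_integral_normal_even_moment[OF this, of 1] False assms show ?thesis by simp
qed simp

lemma brownian_increment_tail:
  assumes "prob_space M" and W: "std_brownian_motion M W" and u: "0 \<le> u" and h: "0 < h" and y: "0 < y"
  shows "measure M {\<omega>\<in>space M. y < \<bar>\<sigma>\<bar> * \<bar>W (u+h) \<omega> - W u \<omega>\<bar>}
    \<le> fact (2*m) / ((2/h)^m * fact m) * (\<bar>\<sigma>\<bar>/y)^(2*m)"
proof (cases "\<sigma> = 0")
  case False
  have "{\<omega>\<in>space M. y < \<bar>\<sigma>\<bar> * \<bar>W (u+h) \<omega> - W u \<omega>\<bar>} = {\<omega>\<in>space M. y/\<bar>\<sigma>\<bar> < \<bar>W (u+h) \<omega> - W u \<omega>\<bar>}"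
    using False by (auto simp: field_simps)
  also have "measure M \<dots> \<le> fact (2*m) / ((2/h)^m * fact m) / (y/\<bar>\<sigma>\<bar>)^(2*m)"
    using brownian_measurable[OF W] u h y False nn_integral_normal_even_moment[OF
        brownian_increment_distributed[OF W u h] h, of m]
    by (intro measure_abs_gt_le_even_moment[OF assms(1)]) auto
  finally show ?thesis by (simp add: power_divide)
next
  case True
  hence "{\<omega>\<in>space M. y < \<bar>\<sigma>\<bar> * \<bar>W (u+h) \<omega> - W u \<omega>\<bar>} = {}" using y by auto
  moreover have "0 \<le> fact (2*m) / ((2/h)^m * fact m) * (\<bar>\<sigma>\<bar>/y)^(2*m)"
    using h y by (intro mult_nonneg_nonneg divide_nonneg_nonneg) auto
  ultimately show ?thesis by (metis measure_empty)
qed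

lemma measurable_brownian_sq_deviation:
  assumes W: "std_brownian_motion M W" and u: "0 \<le> u"
  shows "(\<lambda>(s, \<omega>). ennreal (indicator {u..u+h} s * (W s \<omega> - W u \<omega>)\<^sup>2)) \<in> borel_measurable (lborel \<Otimes>\<^sub>M M)"
proof -
  note [measurable] = brownian_measurable[OF W u]
    measurable_continuous_paths[OF brownian_measurable[OF W] brownian_continuous_paths[OF W]]
  have "(\<lambda>p. ennreal (indicator {u..u+h} (fst p) * ((\<lambda>(s, \<omega>). W (max 0 s) \<omega>) p - W u (snd p))\<^sup>2))
      \<in> borel_measurable (lborel \<Otimes>\<^sub>M M)"
    by measurable
  also have "(\<lambda>p. ennreal (indicator {u..u+h} (fst p) * ((\<lambda>(s, \<omega>). W (max 0 s) \<omega>) p - W u (snd p))\<^sup>2))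
      = (\<lambda>(s, \<omega>). ennreal (indicator {u..u+h} s * (W s \<omega> - W u \<omega>)\<^sup>2))"
    using u by (auto simp: indicator_def max_def)
  finally show ?thesis .
qed

lemma nn_integral_brownian_sq_deviation:
  assumes "prob_space M" and W: "std_brownian_motion M W" and u: "0 \<le> u" and h: "0 < h"
  shows "(\<integral>\<^sup>+\<omega>. (\<integral>\<^sup>+s. ennreal (indicator {u..u+h} s * (W s \<omega> - W u \<omega>)\<^sup>2) \<partial>lborel) \<partial>M) \<le> ennreal (h\<^sup>2)"
proof -
  interpret prob_space M by fact
  interpret pair_sigma_finite lborel M by unfold_locales
  have "(\<integral>\<^sup>+\<omega>. (\<integral>\<^sup>+s. ennreal (indicator {u..u+h} s * (W s \<omega> - W u \<omega>)\<^sup>2) \<partial>lborel) \<partial>M)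
      = (\<integral>\<^sup>+s. (\<integral>\<^sup>+\<omega>. ennreal (indicator {u..u+h} s * (W s \<omega> - W u \<omega>)\<^sup>2) \<partial>M) \<partial>lborel)"
    by (rule Fubini'[OF measurable_brownian_sq_deviation[OF W u]])
  also have "\<dots> \<le> (\<integral>\<^sup>+s. ennreal h * indicator {u..u+h} s \<partial>lborel)"
  proof (rule nn_integral_mono)
    fix s
    show "(\<integral>\<^sup>+\<omega>. ennreal (indicator {u..u+h} s * (W s \<omega> - W u \<omega>)\<^sup>2) \<partial>M) \<le> ennreal h * indicator {u..u+h} s"
    proof (cases "s \<in> {u..u+h}")
      case True
      thus ?thesis using nn_integral_brownian_increment_sq[OF W u, of s] by (auto intro: ennreal_leI)
    qed simp
  qed
  also have "\<dots> = ennreal h * emeasure lborel {u..u+h}"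
    by (rule nn_integral_cmult_indicator) simp
  also have "\<dots> = ennreal (h\<^sup>2)"
    using h by (simp add: ennreal_mult'[symmetric] power2_eq_square)
  finally show ?thesis .
qed

lemma prob_brownian_sq_deviation_ge:
  assumes M: "prob_space M" and W: "std_brownian_motion M W" and u: "0 \<le> u" and h: "0 < h" and c: "0 < c"
  defines "S \<equiv> \<lambda>\<omega>. \<integral>\<^sup>+s. ennreal (indicator {u..u+h} s * (W s \<omega> - W u \<omega>)\<^sup>2) \<partial>lborel"
  shows "{\<omega>\<in>space M. ennreal c \<le> ennreal (\<sigma>\<^sup>2) * S \<omega>} \<in> sets M"
    and "measure M {\<omega>\<in>space M. ennreal c \<le> ennreal (\<sigma>\<^sup>2) * S \<omega>} \<le> \<sigma>\<^sup>2 * h\<^sup>2 / c"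
proof -
  interpret prob_space M by fact
  have "(\<lambda>(\<omega>, s). ennreal (indicator {u..u+h} s * (W s \<omega> - W u \<omega>)\<^sup>2)) \<in> borel_measurable (M \<Otimes>\<^sub>M lborel)"
    using measurable_brownian_sq_deviation[OF W u] by (subst measurable_pair_swap_iff) simp
  hence [measurable]: "S \<in> borel_measurable M"
    unfolding S_def by (rule lborel.borel_measurable_nn_integral)
  show "{\<omega>\<in>space M. ennreal c \<le> ennreal (\<sigma>\<^sup>2) * S \<omega>} \<in> sets M" by measurable
  have "(\<integral>\<^sup>+\<omega>. ennreal (\<sigma>\<^sup>2) * S \<omega> \<partial>M) = ennreal (\<sigma>\<^sup>2) * (\<integral>\<^sup>+\<omega>. S \<omega> \<partial>M)"
    by (rule nn_integral_cmult) simp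
  also have "\<dots> \<le> ennreal (\<sigma>\<^sup>2) * ennreal (h\<^sup>2)"
    using nn_integral_brownian_sq_deviation[OF M W u h] unfolding S_def by (rule mult_left_mono) simp
  finally show "measure M {\<omega>\<in>space M. ennreal c \<le> ennreal (\<sigma>\<^sup>2) * S \<omega>} \<le> \<sigma>\<^sup>2 * h\<^sup>2 / c"
    using c by (intro measure_ennreal_Markov) (auto simp flip: ennreal_mult)
qed

lemma poisson_measurable:
  "poisson_process M lam N \<Longrightarrow> 0 \<le> t \<Longrightarrow> N t \<in> measurable M (count_space UNIV)"
  unfolding poisson_process_def by auto

lemma poisson_mono:
  "poisson_process M lam N \<Longrightarrow> \<omega> \<in> space M \<Longrightarrow> 0 \<le> s \<Longrightarrow> s \<le> t \<Longrightarrow> N s \<omega> \<le> N t \<omega>"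
  unfolding poisson_process_def by auto

lemma poisson_increment_prob:
  assumes "poisson_process M lam N" "0 \<le> u" "0 \<le> h"
  shows "measure M {\<omega>\<in>space M. N (u+h) \<omega> - N u \<omega> = k} = exp (- lam * h) * (lam * h) ^ k / fact k"
proof -
  have "\<forall>s t (k::nat). 0 \<le> s \<and> s \<le> t \<longrightarrow> measure M {\<omega>\<in>space M. N t \<omega> - N s \<omega> = k}
      = exp (- lam * (t - s)) * (lam * (t - s)) ^ k / fact k"
    using assms(1) unfolding poisson_process_def by blast
  thus ?thesis using assms(2,3) by (auto dest: spec[of _ u] spec[of _ "u+h"])
qed

lemma poisson_increment_ge_2:
  assumes "prob_space M" and N: "poisson_process M lam N" and u: "0 \<le> u" and h: "0 \<le> h" and lam: "0 \<le> lam"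
  shows "measure M {\<omega>\<in>space M. 2 \<le> N (u+h) \<omega> - N u \<omega>} \<le> (lam * h)\<^sup>2"
proof -
  interpret prob_space M by fact
  have "0 \<le> u + h" using u h by simp
  note [measurable] = poisson_measurable[OF N u] poisson_measurable[OF N this]
  define D where "D \<omega> = N (u+h) \<omega> - N u \<omega>" for \<omega>
  have ev: "{\<omega>\<in>space M. D \<omega> = k} \<in> events" for k
    unfolding D_def by measurable
  have "{\<omega>\<in>space M. 2 \<le> D \<omega>} = space M - ({\<omega>\<in>space M. D \<omega> = 0} \<union> {\<omega>\<in>space M. D \<omega> = 1})"
    by auto
  hence "prob {\<omega>\<in>space M. 2 \<le> D \<omega>} = 1 - prob ({\<omega>\<in>space M. D \<omega> = 0} \<union> {\<omega>\<in>space M. D \<omega> = 1})"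
    using prob_compl[OF sets.Un[OF ev ev]] by simp
  also have "prob ({\<omega>\<in>space M. D \<omega> = 0} \<union> {\<omega>\<in>space M. D \<omega> = 1})
      = prob {\<omega>\<in>space M. D \<omega> = 0} + prob {\<omega>\<in>space M. D \<omega> = 1}"
    by (rule finite_measure_Union[OF ev ev]) auto
  also have "1 - \<dots> = 1 - exp (- (lam * h)) - exp (- (lam * h)) * (lam * h)"
    using poisson_increment_prob[OF N u h, of 0] poisson_increment_prob[OF N u h, of 1]
    unfolding D_def by simp
  also have "\<dots> \<le> (lam * h)\<^sup>2" using lam h by (intro one_minus_exp_minus_le_square) simp
  finally show ?thesis unfolding D_def .
qed

text \<open>The first jump after time \<open>u\<close> has size \<open>Z (N u + 1)\<close>; splitting according to the value of
  \<open>N u\<close> and using the independence of \<open>N\<close> and \<open>Z\<close>, its size is \<open>F\<close>-distributed.\<close>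
lemma prob_single_jump_in:
  assumes "prob_space M" and N: "poisson_process M lam N"
    and Z: "\<And>k. Z k \<in> borel_measurable M" "\<And>k. distr M borel (Z k) = F"
    and indep: "\<And>E G. E \<in> gen_sigma M (count_space UNIV) N {0..} \<Longrightarrow> G \<in> gen_sigma M borel Z UNIV \<Longrightarrow>
        measure M (E \<inter> G) = measure M E * measure M G"
    and u: "0 \<le> u" and h: "0 \<le> h" and B: "B \<in> sets borel"
  shows "measure M {\<omega>\<in>space M. N (u+h) \<omega> - N u \<omega> = 1 \<and> Z (N u \<omega> + 1) \<omega> \<in> B}
    = exp (- lam * h) * (lam * h) * measure F B"
proof -
  interpret prob_space M by fact
  have uh: "0 \<le> u + h" using u h by simp
  define E where "E k = (N u -` {k} \<inter> space M) \<inter> (N (u+h) -` {k+1} \<inter> space M)" for k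
  define G where "G k = Z (k+1) -` B \<inter> space M" for k
  have E: "E k \<in> gen_sigma M (count_space UNIV) N {0..}" for k
    unfolding E_def using u uh by (intro gen_sigma_Int gen_sigma_basic) auto
  have G: "G k \<in> gen_sigma M borel Z UNIV" for k
    unfolding G_def by (intro gen_sigma_basic B) auto
  have Eev: "E k \<in> events" for k
    unfolding E_def using poisson_measurable[OF N u] poisson_measurable[OF N uh] by measurable
  have Gev: "G k \<in> events" for k unfolding G_def using measurable_sets[OF Z(1) B] .
  have PG: "prob (G k) = measure F B" for k
    unfolding G_def using B Z by (simp flip: Z(2)[of "k+1"] add: measure_distr)
  have dE: "disjoint_family E" unfolding disjoint_family_on_def E_def by auto
  have "(\<lambda>k. prob (E k \<inter> G k)) sums prob (\<Union>k. E k \<inter> G k)"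
    using dE Eev Gev by (intro finite_measure_UNION) (auto simp: disjoint_family_on_def)
  hence "(\<lambda>k. prob (E k) * measure F B) sums prob (\<Union>k. E k \<inter> G k)"
    using indep[OF E G] PG by simp
  moreover have "(\<lambda>k. prob (E k) * measure F B) sums (prob (\<Union>k. E k) * measure F B)"
    using finite_measure_UNION[OF _ dE] Eev by (intro sums_mult2) auto
  ultimately have "prob (\<Union>k. E k \<inter> G k) = prob (\<Union>k. E k) * measure F B" by (rule sums_unique2)
  moreover have "(\<Union>k. E k) = {\<omega>\<in>space M. N (u+h) \<omega> - N u \<omega> = 1}" by (auto simp: E_def)
  moreover have "(\<Union>k. E k \<inter> G k) = {\<omega>\<in>space M. N (u+h) \<omega> - N u \<omega> = 1 \<and> Z (N u \<omega> + 1) \<omega> \<in> B}"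
    by (auto simp: E_def G_def)
  ultimately show ?thesis using poisson_increment_prob[OF N u h, of 1] by simp
qed

locale ou_model = prob_space M
  for M :: "'a measure" and W :: "real \<Rightarrow> 'a \<Rightarrow> real" and lam :: real
    and N :: "real \<Rightarrow> 'a \<Rightarrow> nat" and F :: "real measure" and Z :: "nat \<Rightarrow> 'a \<Rightarrow> real"
    and X :: "real \<Rightarrow> 'a \<Rightarrow> real" and a \<sigma> C :: real +
  assumes brownian: "std_brownian_motion M W"
    and poisson: "poisson_process M lam N" and lam_nonneg: "0 \<le> lam"
    and Z_meas: "\<And>k. Z k \<in> borel_measurable M" and Z_distr: "\<And>k. distr M borel (Z k) = F"
    and N_Z_indep: "\<And>E G. E \<in> gen_sigma M (count_space UNIV) N {0..} \<Longrightarrow>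
        G \<in> gen_sigma M borel Z UNIV \<Longrightarrow> prob (E \<inter> G) = prob E * prob G"
    and X_meas: "\<And>s. 0 \<le> s \<Longrightarrow> X s \<in> borel_measurable M"
    and X_int: "\<And>\<omega> s. \<omega> \<in> space M \<Longrightarrow> 0 \<le> s \<Longrightarrow> (\<lambda>r. X r \<omega>) integrable_on {0..s}"
    and X_sde: "\<And>\<omega> s. \<omega> \<in> space M \<Longrightarrow> 0 \<le> s \<Longrightarrow>
        X s \<omega> = X 0 \<omega> - a * integral {0..s} (\<lambda>r. X r \<omega>) + (\<sigma> * W s \<omega> + (\<Sum>k\<in>{1..N s \<omega>}. Z k \<omega>))"
    and a_pos: "0 < a"
    and C_nonneg: "0 \<le> C"
    and second_moment: "\<And>s. 0 \<le> s \<Longrightarrow> (\<integral>\<^sup>+\<omega>. ennreal ((X s \<omega>)\<^sup>2) \<partial>M) \<le> ennreal C"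
begin

definition badset :: "real \<Rightarrow> real \<Rightarrow> real \<Rightarrow> 'a set" where
  "badset v u h =
     {\<omega>\<in>space M. v / (16 * a * h) < \<bar>X u \<omega>\<bar>}
   \<union> {\<omega>\<in>space M. ennreal (v\<^sup>2 / (256 * a\<^sup>2 * h)) \<le>
        ennreal (\<sigma>\<^sup>2) * (\<integral>\<^sup>+s. ennreal (indicator {u..u+h} s * (W s \<omega> - W u \<omega>)\<^sup>2) \<partial>lborel)}
   \<union> {\<omega>\<in>space M. v/8 < \<bar>\<sigma>\<bar> * \<bar>W (u+h) \<omega> - W u \<omega>\<bar>}
   \<union> {\<omega>\<in>space M. 2 \<le> N (u+h) \<omega> - N u \<omega>}
   \<union> {\<omega>\<in>space M. N (u+h) \<omega> - N u \<omega> = 1 \<and> Z (N u \<omega> + 1) \<omega> \<in> {- 2 * v <..< 2 * v}}"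

lemma badset_parts_in_events:
  assumes u: "0 \<le> u" and h: "0 < h" and v: "0 < v"
  shows "{\<omega>\<in>space M. v / (16 * a * h) < \<bar>X u \<omega>\<bar>} \<in> events"
    and "{\<omega>\<in>space M. ennreal (v\<^sup>2 / (256 * a\<^sup>2 * h)) \<le>
        ennreal (\<sigma>\<^sup>2) * (\<integral>\<^sup>+s. ennreal (indicator {u..u+h} s * (W s \<omega> - W u \<omega>)\<^sup>2) \<partial>lborel)} \<in> events"
    and "{\<omega>\<in>space M. v/8 < \<bar>\<sigma>\<bar> * \<bar>W (u+h) \<omega> - W u \<omega>\<bar>} \<in> events"
    and "{\<omega>\<in>space M. 2 \<le> N (u+h) \<omega> - N u \<omega>} \<in> events"
    and "{\<omega>\<in>space M. N (u+h) \<omega> - N u \<omega> = 1 \<and> Z (N u \<omega> + 1) \<omega> \<in> {- 2 * v <..< 2 * v}} \<in> events"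
proof -
  have uh: "0 \<le> u + h" using u h by simp
  have Zm: "(\<lambda>\<omega>. Z (N u \<omega> + 1) \<omega>) \<in> borel_measurable M"
    by (rule measurable_compose_countable[where f="\<lambda>k. Z (k + 1)"])
      (use Z_meas poisson_measurable[OF poisson u] in measurable)
  have c2: "0 < v\<^sup>2 / (256 * a\<^sup>2 * h)" using v a_pos h by simp
  show "{\<omega>\<in>space M. ennreal (v\<^sup>2 / (256 * a\<^sup>2 * h)) \<le>
        ennreal (\<sigma>\<^sup>2) * (\<integral>\<^sup>+s. ennreal (indicator {u..u+h} s * (W s \<omega> - W u \<omega>)\<^sup>2) \<partial>lborel)} \<in> events"
    by (rule prob_brownian_sq_deviation_ge(1)[OF prob_space_axioms brownian u h c2])
  show "{\<omega>\<in>space M. v / (16 * a * h) < \<bar>X u \<omega>\<bar>} \<in> events" using X_meas[OF u] by measurable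
  show "{\<omega>\<in>space M. v/8 < \<bar>\<sigma>\<bar> * \<bar>W (u+h) \<omega> - W u \<omega>\<bar>} \<in> events"
    using brownian_measurable[OF brownian u] brownian_measurable[OF brownian uh] by measurable
  show "{\<omega>\<in>space M. 2 \<le> N (u+h) \<omega> - N u \<omega>} \<in> events"
    "{\<omega>\<in>space M. N (u+h) \<omega> - N u \<omega> = 1 \<and> Z (N u \<omega> + 1) \<omega> \<in> {- 2 * v <..< 2 * v}} \<in> events"
    using poisson_measurable[OF poisson u] poisson_measurable[OF poisson uh] Zm by measurable
qed

lemma prob_badset_le:
  assumes u: "0 \<le> u" and h: "0 < h" and v: "0 < v"
  shows "badset v u h \<in> events"
    and "prob (badset v u h) \<le> 256 * a\<^sup>2 * C * h\<^sup>2 / v\<^sup>2 + 256 * a\<^sup>2 * \<sigma>\<^sup>2 * h ^ 3 / v\<^sup>2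
      + fact (2*m) / ((2/h)^m * fact m) * (8 * \<bar>\<sigma>\<bar> / v) ^ (2*m) + (lam * h)\<^sup>2
      + lam * h * measure F {- 2 * v <..< 2 * v}"
proof -
  define S1 where "S1 = {\<omega>\<in>space M. v / (16 * a * h) < \<bar>X u \<omega>\<bar>}"
  define S2 where "S2 = {\<omega>\<in>space M. ennreal (v\<^sup>2 / (256 * a\<^sup>2 * h)) \<le>
        ennreal (\<sigma>\<^sup>2) * (\<integral>\<^sup>+s. ennreal (indicator {u..u+h} s * (W s \<omega> - W u \<omega>)\<^sup>2) \<partial>lborel)}"
  define S3 where "S3 = {\<omega>\<in>space M. v/8 < \<bar>\<sigma>\<bar> * \<bar>W (u+h) \<omega> - W u \<omega>\<bar>}"
  define S4 where "S4 = {\<omega>\<in>space M. 2 \<le> N (u+h) \<omega> - N u \<omega>}"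
  define S5 where "S5 = {\<omega>\<in>space M. N (u+h) \<omega> - N u \<omega> = 1 \<and> Z (N u \<omega> + 1) \<omega> \<in> {- 2 * v <..< 2 * v}}"
  have c2: "0 < v\<^sup>2 / (256 * a\<^sup>2 * h)" using v a_pos h by simp
  note S = badset_parts_in_events[OF u h v, folded S1_def S2_def S3_def S4_def S5_def]
  have bad: "badset v u h = S1 \<union> S2 \<union> S3 \<union> S4 \<union> S5"
    unfolding badset_def S1_def S2_def S3_def S4_def S5_def ..
  thus "badset v u h \<in> events" using S by simp
  have "prob S1 \<le> C / (v / (16 * a * h)) ^ (2*1)" unfolding S1_def
    using second_moment[OF u] C_nonneg v h a_pos X_meas[OF u]
    by (intro measure_abs_gt_le_even_moment[OF prob_space_axioms]) simp_all
  also have "\<dots> = 256 * a\<^sup>2 * C * h\<^sup>2 / v\<^sup>2" by (simp add: field_simps power2_eq_square)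
  finally have p1: "prob S1 \<le> 256 * a\<^sup>2 * C * h\<^sup>2 / v\<^sup>2" .
  have "prob S2 \<le> \<sigma>\<^sup>2 * h\<^sup>2 / (v\<^sup>2 / (256 * a\<^sup>2 * h))"
    unfolding S2_def by (rule prob_brownian_sq_deviation_ge(2)[OF prob_space_axioms brownian u h c2])
  also have "\<dots> = 256 * a\<^sup>2 * \<sigma>\<^sup>2 * h ^ 3 / v\<^sup>2"
    using v h a_pos by (simp add: field_simps power2_eq_square power3_eq_cube)
  finally have p2: "prob S2 \<le> 256 * a\<^sup>2 * \<sigma>\<^sup>2 * h ^ 3 / v\<^sup>2" .
  have p3: "prob S3 \<le> fact (2*m) / ((2/h)^m * fact m) * (8 * \<bar>\<sigma>\<bar> / v) ^ (2*m)"
    using brownian_increment_tail[OF prob_space_axioms brownian u h, of "v/8" \<sigma> m] v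
    unfolding S3_def by (simp add: mult.commute)
  have p4: "prob S4 \<le> (lam * h)\<^sup>2" unfolding S4_def
    using h by (intro poisson_increment_ge_2[OF prob_space_axioms poisson u _ lam_nonneg]) simp
  have "prob S5 = exp (- lam * h) * (lam * h) * measure F {- 2 * v <..< 2 * v}" unfolding S5_def
    using h by (intro prob_single_jump_in[OF prob_space_axioms poisson Z_meas Z_distr N_Z_indep u]) auto
  also have "\<dots> \<le> lam * h * measure F {- 2 * v <..< 2 * v}"
    using lam_nonneg h by (intro mult_right_mono) (auto simp: mult_left_le_one_le)
  finally have p5: "prob S5 \<le> lam * h * measure F {- 2 * v <..< 2 * v}" .
  have "prob (S1 \<union> S2 \<union> S3 \<union> S4 \<union> S5) \<le> prob (S1 \<union> S2 \<union> S3 \<union> S4) + prob S5"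
    and "prob (S1 \<union> S2 \<union> S3 \<union> S4) \<le> prob (S1 \<union> S2 \<union> S3) + prob S4"
    and "prob (S1 \<union> S2 \<union> S3) \<le> prob (S1 \<union> S2) + prob S3"
    and "prob (S1 \<union> S2) \<le> prob S1 + prob S2"
    using S by (intro measure_Un_le; simp)+
  thus "prob (badset v u h) \<le> 256 * a\<^sup>2 * C * h\<^sup>2 / v\<^sup>2 + 256 * a\<^sup>2 * \<sigma>\<^sup>2 * h ^ 3 / v\<^sup>2
      + fact (2*m) / ((2/h)^m * fact m) * (8 * \<bar>\<sigma>\<bar> / v) ^ (2*m) + (lam * h)\<^sup>2
      + lam * h * measure F {- 2 * v <..< 2 * v}"
    unfolding bad using p1 p2 p3 p4 p5 by linarith
qed

lemma increment_le_iff_no_jump_outside_badset: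
  assumes \<omega>: "\<omega> \<in> space M - badset v u h" and u: "0 \<le> u" and h: "0 < h" and v: "0 < v"
    and ah: "a * h \<le> 1/8"
  shows "\<bar>X (u+h) \<omega> - X u \<omega>\<bar> \<le> v \<longleftrightarrow> real (N (u+h) \<omega>) - real (N u \<omega>) = 0"
proof (rule increment_le_iff_no_jump[where Xf="\<lambda>s. X s \<omega>" and Wf="\<lambda>s. W s \<omega>" and Nf="\<lambda>s. N s \<omega>"
      and Zf="\<lambda>k. Z k \<omega>" and u=u and h=h and v=v and a=a and \<sigma>=\<sigma>])
  from \<omega> have \<omega>M: "\<omega> \<in> space M" by simp
  show "\<And>s. 0 \<le> s \<Longrightarrow> X s \<omega> = X 0 \<omega> - a * integral {0..s} (\<lambda>r. X r \<omega>) + (\<sigma> * W s \<omega> + (\<Sum>k\<in>{1..N s \<omega>}. Z k \<omega>))"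
    "\<And>s. 0 \<le> s \<Longrightarrow> (\<lambda>r. X r \<omega>) integrable_on {0..s}"
    "continuous_on {0..} (\<lambda>t. W t \<omega>)" "\<And>s t. 0 \<le> s \<Longrightarrow> s \<le> t \<Longrightarrow> N s \<omega> \<le> N t \<omega>"
    using X_sde[OF \<omega>M] X_int[OF \<omega>M] brownian_continuous_paths[OF brownian \<omega>M]
      poisson_mono[OF poisson \<omega>M] by blast+
  from \<omega> have nb: "\<omega> \<notin> badset v u h" by simp
  have n1: "\<bar>X u \<omega>\<bar> \<le> v / (16 * a * h)"
    using nb \<omega>M unfolding badset_def by (simp add: not_less)
  have "\<not> ennreal (v\<^sup>2 / (256 * a\<^sup>2 * h)) \<le>
      ennreal (\<sigma>\<^sup>2) * (\<integral>\<^sup>+s. ennreal (indicator {u..u+h} s * (W s \<omega> - W u \<omega>)\<^sup>2) \<partial>lborel)"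
    using nb \<omega>M unfolding badset_def by blast
  moreover have "v\<^sup>2 / (256 * a\<^sup>2 * h) = (v / (16 * a))\<^sup>2 / h"
    by (simp add: power_divide power_mult_distrib)
  ultimately have n2: "ennreal (\<sigma>\<^sup>2) * (\<integral>\<^sup>+s. ennreal (indicator {u..u+h} s * (W s \<omega> - W u \<omega>)\<^sup>2) \<partial>lborel)
      < ennreal ((v / (16 * a))\<^sup>2 / h)"
    by (simp add: not_le)
  have n3: "\<bar>\<sigma>\<bar> * \<bar>W (u+h) \<omega> - W u \<omega>\<bar> \<le> v/8"
    using nb \<omega>M unfolding badset_def by (simp add: not_less)
  have n4: "\<not> 2 \<le> N (u+h) \<omega> - N u \<omega>"
    and n5: "\<not> (N (u+h) \<omega> - N u \<omega> = 1 \<and> Z (N u \<omega> + 1) \<omega> \<in> {- 2 * v <..< 2 * v})"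
    using nb \<omega>M unfolding badset_def by blast+
  show "a * h * \<bar>X u \<omega>\<bar> \<le> v/16"
    using mult_left_mono[OF n1, of "a * h"] a_pos h by simp
  have "\<bar>\<sigma>\<bar> * integral {u..u+h} (\<lambda>s. \<bar>W s \<omega> - W u \<omega>\<bar>) < v / (16 * a)"
    using u h v a_pos brownian_continuous_paths[OF brownian \<omega>M]
    by (intro integral_abs_less_of_nn_integral_square[OF _ h _ n2] continuous_intros)
      (auto elim: continuous_on_subset)
  thus "a * \<bar>\<sigma>\<bar> * integral {u..u+h} (\<lambda>s. \<bar>W s \<omega> - W u \<omega>\<bar>) \<le> v/16"
    using a_pos by (simp add: field_simps)
  show "\<bar>\<sigma>\<bar> * \<bar>W (u+h) \<omega> - W u \<omega>\<bar> \<le> v/8" by (fact n3)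
  show "N (u+h) \<omega> \<le> N u \<omega> + 1" using n4 by simp
  show "N (u+h) \<omega> = N u \<omega> + 1 \<Longrightarrow> 2 * v \<le> \<bar>Z (N u \<omega> + 1) \<omega>\<bar>" using n5 by auto
qed (use u h a_pos v ah in auto)

lemma prob_badset_le_powr:
  assumes u: "0 \<le> u" and h: "0 < h" "h \<le> D"
  shows "prob (badset (D powr \<beta>) u h) \<le> 256 * a\<^sup>2 * C * D powr (2 - 2*\<beta>) + 256 * a\<^sup>2 * \<sigma>\<^sup>2 * D powr (3 - 2*\<beta>)
      + fact (2*m) / (2^m * fact m) * (8 * \<bar>\<sigma>\<bar>)^(2*m) * D powr (real m - 2 * real m * \<beta>)
      + lam\<^sup>2 * D * h + lam * h * measure F {- 2 * D powr \<beta> <..< 2 * D powr \<beta>}"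
proof -
  define v where "v = D powr \<beta>"
  have v: "0 < v" using h by (simp add: v_def)
  have "256 * a\<^sup>2 * C * (h\<^sup>2 / v\<^sup>2) \<le> 256 * a\<^sup>2 * C * D powr (2 - 2*\<beta>)"
    using power_divide_powr_le[OF h, of 2 \<beta> 2] C_nonneg by (intro mult_left_mono) (simp_all add: v_def)
  moreover have "256 * a\<^sup>2 * \<sigma>\<^sup>2 * (h ^ 3 / v\<^sup>2) \<le> 256 * a\<^sup>2 * \<sigma>\<^sup>2 * D powr (3 - 2*\<beta>)"
    using power_divide_powr_le[OF h, of 3 \<beta> 2] by (intro mult_left_mono) (simp_all add: v_def)
  moreover have "fact (2*m) / ((2/h)^m * fact m) * (8 * \<bar>\<sigma>\<bar> / v) ^ (2*m)
      = fact (2*m) / (2^m * fact m) * (8 * \<bar>\<sigma>\<bar>)^(2*m) * (h ^ m / v ^ (2*m))"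
    using h v by (simp add: power_divide)
  moreover have "fact (2*m) / (2^m * fact m) * (8 * \<bar>\<sigma>\<bar>)^(2*m) * (h ^ m / v ^ (2*m))
      \<le> fact (2*m) / (2^m * fact m) * (8 * \<bar>\<sigma>\<bar>)^(2*m) * D powr (real m - 2 * real m * \<beta>)"
    using power_divide_powr_le[OF h, of m \<beta> "2*m"] by (intro mult_left_mono) (simp_all add: v_def)
  moreover have "(lam * h)\<^sup>2 = lam\<^sup>2 * h * h" by (simp add: power_mult_distrib power2_eq_square)
  moreover have "lam\<^sup>2 * h * h \<le> lam\<^sup>2 * D * h" using h by (intro mult_right_mono mult_left_mono) auto
  ultimately show ?thesis
    using prob_badset_le(2)[OF u h(1) v, of m] unfolding v_def times_divide_eq_right by linarith
qed

lemma grid_good_in_events: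
  assumes tnn: "\<And>i. i \<le> n \<Longrightarrow> 0 \<le> t i"
  shows "{\<omega>\<in>space M. \<forall>i<n. (\<bar>X (t (Suc i)) \<omega> - X (t i) \<omega>\<bar> \<le> v)
      \<longleftrightarrow> (real (N (t (Suc i)) \<omega>) - real (N (t i) \<omega>) = 0)} \<in> events"
proof -
  have "{\<omega>\<in>space M. \<forall>i\<in>{..<n}. (\<bar>X (t (Suc i)) \<omega> - X (t i) \<omega>\<bar> \<le> v)
      \<longleftrightarrow> (real (N (t (Suc i)) \<omega>) - real (N (t i) \<omega>) = 0)} \<in> events"
  proof (rule sets.sets_Collect_finite_All)
    fix i assume "i \<in> {..<n}"
    hence "0 \<le> t i" "0 \<le> t (Suc i)" using tnn by auto
    note [measurable] = X_meas[OF this(1)] X_meas[OF this(2)]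
      poisson_measurable[OF poisson this(1)] poisson_measurable[OF poisson this(2)]
    show "{\<omega>\<in>space M. (\<bar>X (t (Suc i)) \<omega> - X (t i) \<omega>\<bar> \<le> v)
        \<longleftrightarrow> (real (N (t (Suc i)) \<omega>) - real (N (t i) \<omega>) = 0)} \<in> events"
      by measurable
  qed simp
  thus ?thesis by (simp only: lessThan_iff Ball_def)
qed

lemma grid_no_jump_outside_badsets:
  fixes t :: "nat \<Rightarrow> real"
  assumes tnn: "\<And>i. i \<le> n \<Longrightarrow> 0 \<le> t i" and t_mono: "\<And>i. i < n \<Longrightarrow> t i < t (Suc i)"
    and step: "\<And>i. i < n \<Longrightarrow> t (Suc i) - t i \<le> D" and aD: "a * D \<le> 1/8" and v: "0 < v"
  shows "space M - (\<Union>i\<in>{..<n}. badset v (t i) (t (Suc i) - t i))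
    \<subseteq> {\<omega>\<in>space M. \<forall>i<n. (\<bar>X (t (Suc i)) \<omega> - X (t i) \<omega>\<bar> \<le> v)
        \<longleftrightarrow> (real (N (t (Suc i)) \<omega>) - real (N (t i) \<omega>) = 0)}"
proof
  fix \<omega> assume \<omega>: "\<omega> \<in> space M - (\<Union>i\<in>{..<n}. badset v (t i) (t (Suc i) - t i))"
  have "(\<bar>X (t (Suc i)) \<omega> - X (t i) \<omega>\<bar> \<le> v) \<longleftrightarrow> real (N (t (Suc i)) \<omega>) - real (N (t i) \<omega>) = 0"
    if i: "i < n" for i
  proof -
    have "a * (t (Suc i) - t i) \<le> 1/8"
      using mult_left_mono[OF step[OF i], of a] a_pos aD by linarith
    moreover have "\<omega> \<in> space M - badset v (t i) (t (Suc i) - t i)" using \<omega> i by blast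
    ultimately show ?thesis
      using increment_le_iff_no_jump_outside_badset[of \<omega> v "t i" "t (Suc i) - t i"]
        tnn[of i] t_mono[OF i] v i by simp
  qed
  thus "\<omega> \<in> {\<omega>\<in>space M. \<forall>i<n. (\<bar>X (t (Suc i)) \<omega> - X (t i) \<omega>\<bar> \<le> v)
      \<longleftrightarrow> (real (N (t (Suc i)) \<omega>) - real (N (t i) \<omega>) = 0)}" using \<omega> by blast
qed

lemma prob_grid_good_ge:
  fixes t :: "nat \<Rightarrow> real"
  assumes t0: "t 0 = 0" and t_mono: "\<And>i. i < n \<Longrightarrow> t i < t (Suc i)"
    and step: "\<And>i. i < n \<Longrightarrow> t (Suc i) - t i \<le> D" and aD: "a * D \<le> 1/8"
  shows "1 - (real n * (256 * a\<^sup>2 * C * D powr (2 - 2*\<beta>) + 256 * a\<^sup>2 * \<sigma>\<^sup>2 * D powr (3 - 2*\<beta>)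
        + fact (2*m) / (2^m * fact m) * (8 * \<bar>\<sigma>\<bar>)^(2*m) * D powr (real m - 2 * real m * \<beta>))
        + lam\<^sup>2 * D * t n + lam * t n * measure F {- 2 * D powr \<beta> <..< 2 * D powr \<beta>})
    \<le> prob {\<omega>\<in>space M. \<forall>i<n. (\<bar>X (t (Suc i)) \<omega> - X (t i) \<omega>\<bar> \<le> D powr \<beta>)
        \<longleftrightarrow> (real (N (t (Suc i)) \<omega>) - real (N (t i) \<omega>) = 0)}"
    (is "1 - (real n * ?c + lam\<^sup>2 * D * t n + lam * t n * ?F) \<le> prob ?G")
proof -
  define Bad where "Bad i = badset (D powr \<beta>) (t i) (t (Suc i) - t i)" for i
  have tnn: "0 \<le> t i" if "i \<le> n" for i by (rule grid_nonneg[OF t0 t_mono that])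
  have h: "0 < t (Suc i) - t i" "0 < D powr \<beta>" if "i < n" for i
    using t_mono[OF that] step[OF that] by auto
  have Bad: "Bad i \<in> events" if "i < n" for i
    unfolding Bad_def using tnn[of i] h[OF that] that by (intro prob_badset_le(1)) auto
  have G: "?G \<in> events" using tnn by (rule grid_good_in_events)
  have sub: "space M - (\<Union>i\<in>{..<n}. Bad i) \<subseteq> ?G"
  proof (cases "n = 0")
    case False
    thus ?thesis unfolding Bad_def using h[of 0]
      by (intro grid_no_jump_outside_badsets[where t=t and n=n and D=D, OF tnn t_mono step aD]) auto
  qed simp
  have lower: "1 - (\<Sum>i<n. prob (Bad i)) \<le> prob ?G"
    using Bad by (intro prob_ge_one_minus_sum[OF prob_space_axioms _ G _ sub]) auto
  have "(\<Sum>i<n. prob (Bad i))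
      \<le> (\<Sum>i<n. ?c + lam\<^sup>2 * D * (t (Suc i) - t i) + lam * (t (Suc i) - t i) * ?F)"
  proof (rule sum_mono)
    fix i assume "i \<in> {..<n}"
    thus "prob (Bad i) \<le> ?c + lam\<^sup>2 * D * (t (Suc i) - t i) + lam * (t (Suc i) - t i) * ?F"
      unfolding Bad_def using tnn[of i] h[of i] step[of i] by (intro prob_badset_le_powr) auto
  qed
  also have "\<dots> = real n * ?c + lam\<^sup>2 * D * t n + lam * t n * ?F"
  proof -
    have "(\<Sum>i<n. t (Suc i) - t i) = t n" using t0 by (simp add: sum_lessThan_telescope)
    thus ?thesis
      by (simp only: sum.distrib sum_constant card_lessThan flip: sum_distrib_left sum_distrib_right)
        (simp only: distrib_left)
  qed
  finally show ?thesis using lower by linarith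
qed

end

lemma grid_term_tendsto_0:
  fixes T \<Delta> :: "nat \<Rightarrow> real"
  assumes \<Delta>: "\<Delta> \<longlonglongrightarrow> 0" "\<forall>\<^sub>F n in sequentially. 0 < \<Delta> n" and T: "\<forall>\<^sub>F n in sequentially. 0 < T n"
    and scheme: "(\<lambda>n. real n * \<Delta> n / T n) \<in> O(\<lambda>_. 1)"
    and rate: "(\<lambda>n. T n * \<Delta> n powr p) \<longlonglongrightarrow> 0" and q: "p + 1 \<le> q"
  shows "(\<lambda>n. real n * \<Delta> n powr q) \<longlonglongrightarrow> 0"
proof -
  obtain K where K: "\<forall>\<^sub>F n in sequentially. norm (real n * \<Delta> n / T n) \<le> K * norm (1::real)"
    using landau_o.bigE[OF scheme] by blast
  have "\<forall>\<^sub>F n in sequentially. \<Delta> n < 1" using \<Delta>(1) by (rule order_tendstoD) simp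
  with K \<Delta>(2) T have "\<forall>\<^sub>F n in sequentially. 0 \<le> real n * \<Delta> n powr q \<and>
      real n * \<Delta> n powr q \<le> K * (T n * \<Delta> n powr p)"
  proof eventually_elim
    case (elim n)
    hence nK: "real n * \<Delta> n \<le> K * T n" by (simp add: abs_le_iff pos_divide_le_eq)
    have "real n * \<Delta> n powr q = (real n * \<Delta> n) * \<Delta> n powr (q - 1)"
      using elim powr_add[of "\<Delta> n" 1 "q - 1"] by simp
    also have "\<dots> \<le> (K * T n) * \<Delta> n powr (q - 1)" using nK by (rule mult_right_mono) simp
    also have "\<dots> \<le> (K * T n) * \<Delta> n powr p"
      using order_trans[OF mult_nonneg_nonneg[of "real n" "\<Delta> n"] nK] elim q
      by (intro mult_left_mono powr_mono') auto
    finally show ?case using elim by simp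
  qed
  thus ?thesis
    by (intro tendsto_sandwich[OF _ _ tendsto_const tendsto_mult_right_zero[OF rate]])
      (auto elim: eventually_mono)
qed

lemma grid_bound_tendsto_0:
  fixes T \<Delta> Fn :: "nat \<Rightarrow> real"
  assumes \<Delta>: "\<Delta> \<longlonglongrightarrow> 0" "\<forall>\<^sub>F n in sequentially. 0 < \<Delta> n" and T: "\<forall>\<^sub>F n in sequentially. 0 < T n"
    and scheme: "(\<lambda>n. real n * \<Delta> n / T n) \<in> O(\<lambda>_. 1)"
    and rate: "(\<lambda>n. T n * \<Delta> n powr p) \<longlonglongrightarrow> 0" and p: "p \<le> 1" "p + 1 \<le> q1" "p + 1 \<le> q2" "p + 1 \<le> q3"
    and Fn: "Fn \<in> o(\<lambda>n. 1 / T n)"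
  shows "(\<lambda>n. real n * (A1 * \<Delta> n powr q1 + A2 * \<Delta> n powr q2 + A3 * \<Delta> n powr q3)
      + B * \<Delta> n * T n + c * T n * Fn n) \<longlonglongrightarrow> 0"
proof -
  have "(\<lambda>n. \<Delta> n * T n) \<longlonglongrightarrow> 0"
  proof (rule tendsto_sandwich[OF _ _ tendsto_const rate])
    have "\<forall>\<^sub>F n in sequentially. \<Delta> n < 1" using \<Delta>(1) by (rule order_tendstoD) simp
    with \<Delta>(2) T show "\<forall>\<^sub>F n in sequentially. \<Delta> n * T n \<le> T n * \<Delta> n powr p"
      by eventually_elim (use powr_mono'[OF p(1), of "\<Delta> _"] in \<open>auto simp: mult.commute\<close>)
    from \<Delta>(2) T show "\<forall>\<^sub>F n in sequentially. 0 \<le> \<Delta> n * T n" by eventually_elim simp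
  qed
  moreover have "(\<lambda>n. Fn n / (1 / T n)) \<longlonglongrightarrow> 0" by (rule smalloD_tendsto[OF Fn])
  moreover note grid_term_tendsto_0[OF \<Delta> T scheme rate]
  ultimately have "(\<lambda>n. A1 * (real n * \<Delta> n powr q1) + A2 * (real n * \<Delta> n powr q2)
      + A3 * (real n * \<Delta> n powr q3) + B * (\<Delta> n * T n) + c * (Fn n / (1 / T n))) \<longlonglongrightarrow> 0"
    using p by (intro tendsto_add_zero tendsto_mult_right_zero) auto
  thus ?thesis by (simp add: algebra_simps)
qed

theorem lemma3p3:
  fixes M :: "'a measure" and F :: "real measure"
    and W :: "real \<Rightarrow> 'a \<Rightarrow> real" and N :: "real \<Rightarrow> 'a \<Rightarrow> nat"
    and Z :: "nat \<Rightarrow> 'a \<Rightarrow> real" and X :: "real \<Rightarrow> 'a \<Rightarrow> real"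
    and \<sigma> a lam \<beta> :: real
    and t :: "nat \<Rightarrow> nat \<Rightarrow> real"
    and T Delta :: "nat \<Rightarrow> real"
  assumes M: "prob_space M"
    \<comment> \<open>the Levy process L = sigma W + J, J compound Poisson\<close>
    and W: "std_brownian_motion M W"
    and lam: "0 < lam"
    and N: "poisson_process M lam N"
    and F: "prob_space F" "sets F = sets borel"
    and Z_distr: "\<And>k. Z k \<in> borel_measurable M" "\<And>k. distr M borel (Z k) = F"
    and Z_indep: "prob_space.indep_vars M (\<lambda>_. borel) Z UNIV"
    and X0_meas: "X 0 \<in> borel_measurable M"
    and indep: "prob_space.indep_sets M
        (\<lambda>j::nat. if j = 0 then gen_sigma M borel (\<lambda>_::unit. X 0) UNIV
                 else if j = 1 then gen_sigma M borel W {0..}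
                 else if j = 2 then gen_sigma M (count_space UNIV) N {0..}
                 else gen_sigma M borel Z UNIV) {0..3}"
    \<comment> \<open>X solves dX_t = -a X_t dt + dL_t (integral form, pathwise)\<close>
    and X_meas: "\<And>s. s \<ge> 0 \<Longrightarrow> X s \<in> borel_measurable M"
    and X_int: "\<And>\<omega> s. \<omega> \<in> space M \<Longrightarrow> s \<ge> 0 \<Longrightarrow> (\<lambda>r. X r \<omega>) integrable_on {0..s}"
    and X_sde: "\<And>\<omega> s. \<omega> \<in> space M \<Longrightarrow> s \<ge> 0 \<Longrightarrow>
        X s \<omega> = X 0 \<omega> - a * integral {0..s} (\<lambda>r. X r \<omega>)
                 + (\<sigma> * W s \<omega> + (\<Sum>k\<in>{1..N s \<omega>}. Z k \<omega>))"
    \<comment> \<open>(i)\<close>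
    and a_pos: "0 < a"
    and log_moment: "(\<integral>\<^sup>+x. ennreal (indicator {x. 1 < \<bar>x\<bar>} x * ln \<bar>x\<bar>) \<partial>F) < \<infinity>"
    and second_moment: "\<exists>C::real. \<forall>s\<ge>0. (\<integral>\<^sup>+\<omega>. ennreal ((X s \<omega>)\<^sup>2) \<partial>M) \<le> ennreal C"
    \<comment> \<open>observation scheme\<close>
    and t0: "\<And>n. t n 0 = 0"
    and t_mono: "\<And>n i. i < n \<Longrightarrow> t n i < t n (Suc i)"
    and T_def: "\<And>n. T n = t n n"
    and T_lim: "filterlim T at_top sequentially"
    and Delta_def: "\<And>n. Delta n = Max {t n (Suc i) - t n i | i. i < n}"
    and Delta_dec: "decseq Delta"
    and Delta_lim: "Delta \<longlonglongrightarrow> 0"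
    and scheme: "(\<lambda>n. real n * Delta n / T n) \<in> O(\<lambda>_. 1)"
    \<comment> \<open>(ii)\<close>
    and small_jumps: "(\<lambda>n. measure F {- 2 * Delta n powr \<beta> <..< 2 * Delta n powr \<beta>}) \<in> o(\<lambda>n. 1 / T n)"
    \<comment> \<open>(iii)\<close>
    and \<beta>: "0 < \<beta>" "\<beta> < 1/2"
    and rate: "(\<lambda>n. T n * Delta n powr (min (1 - 2 * \<beta>) (1/2))) \<longlonglongrightarrow> 0"
  shows "(\<lambda>n. measure M {\<omega>\<in>space M. \<forall>i<n.
            (\<bar>X (t n (Suc i)) \<omega> - X (t n i) \<omega>\<bar> \<le> Delta n powr \<beta>)
              \<longleftrightarrow> (real (N (t n (Suc i)) \<omega>) - real (N (t n i) \<omega>) = 0)}) \<longlonglongrightarrow> 1"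
proof -
  interpret prob_space M by (fact M)
  obtain C where C: "\<And>s. 0 \<le> s \<Longrightarrow> (\<integral>\<^sup>+\<omega>. ennreal ((X s \<omega>)\<^sup>2) \<partial>M) \<le> ennreal (max C 0)"
    using second_moment by (meson ennreal_leI max.cobounded1 order_trans)
  have NZ: "prob (E \<inter> G) = prob E * prob G"
    if "E \<in> gen_sigma M (count_space UNIV) N {0..}" "G \<in> gen_sigma M borel Z UNIV" for E G
    using indep_sets_pairD[OF indep, of 2 3] that by simp
  interpret ou_model M W lam N F Z X a \<sigma> "max C 0"
    by unfold_locales (fact W N less_imp_le[OF lam] Z_distr NZ X_meas X_int X_sde a_pos C
        max.cobounded2)+
  \<comment> \<open>order of the Gaussian moment bounding \<open>\<Delta>W\<close>; \<open>m (1 - 2\<beta>) > 3/2\<close> makes its share \<open>O(T \<Delta>\<^bsup>1/2\<^esup>)\<close>\<close>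
  have "\<forall>y. \<exists>m::nat. y < real m * (1 - 2*\<beta>)" using \<beta> by (intro reals_Archimedean3) simp
  then obtain m :: nat where m: "3/2 < real m * (1 - 2*\<beta>)" by blast
  have Delta_pos: "\<forall>\<^sub>F n in sequentially. 0 < Delta n"
    using eventually_gt_at_top[of 0]
  proof eventually_elim
    case (elim n)
    thus ?case using t_mono[of 0 n] grid_step_le_Max[of 0 n "t n"] Delta_def[of n] by simp
  qed
  define bnd where "bnd n = real n * (256 * a\<^sup>2 * max C 0 * Delta n powr (2 - 2*\<beta>)
      + 256 * a\<^sup>2 * \<sigma>\<^sup>2 * Delta n powr (3 - 2*\<beta>)
      + fact (2*m) / (2^m * fact m) * (8 * \<bar>\<sigma>\<bar>)^(2*m) * Delta n powr (real m - 2 * real m * \<beta>))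
      + lam\<^sup>2 * Delta n * T n + lam * T n * measure F {- 2 * Delta n powr \<beta> <..< 2 * Delta n powr \<beta>}"
    for n
  have "\<forall>\<^sub>F n in sequentially. a * Delta n \<le> 1/8"
    using Delta_lim a_pos by (auto dest!: order_tendstoD(2)[of _ 0 _ "1 / (8 * a)"]
        elim!: eventually_mono simp: field_simps)
  hence lower: "\<forall>\<^sub>F n in sequentially. 1 - bnd n
      \<le> measure M {\<omega>\<in>space M. \<forall>i<n. (\<bar>X (t n (Suc i)) \<omega> - X (t n i) \<omega>\<bar> \<le> Delta n powr \<beta>)
        \<longleftrightarrow> (real (N (t n (Suc i)) \<omega>) - real (N (t n i) \<omega>) = 0)}"
  proof eventually_elim
    case (elim n)
    have step: "t n (Suc i) - t n i \<le> Delta n" if "i < n" for i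
      using grid_step_le_Max[OF that, of "t n"] Delta_def[of n] by simp
    show ?case unfolding T_def bnd_def
      by (rule prob_grid_good_ge[where t="t n" and n=n and D="Delta n", OF t0 t_mono step elim])
  qed
  have "bnd \<longlonglongrightarrow> 0" unfolding bnd_def
    using \<beta> m T_lim by (intro grid_bound_tendsto_0[OF Delta_lim Delta_pos _ scheme rate _ _ _ _ small_jumps])
      (auto simp: filterlim_at_top_dense algebra_simps)
  hence "(\<lambda>n. 1 - bnd n) \<longlonglongrightarrow> 1" using tendsto_diff[OF tendsto_const, of bnd 0 sequentially 1] by simp
  thus ?thesis by (intro tendsto_sandwich[OF lower _ _ tendsto_const]) (auto simp: prob_le_1)
qed

end
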